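(* Let $A$ be a finite undirected multigraph (an object of $\mathbf{uGraph}$) possessing an edge $e$ such that removing $e$ from $A$ yields a disjoint union $A_1+A_2$ of two subgraphs (i.e. $e$ is a bridge), and let $A_1+A_2\hookrightarrow A$ be the inclusion. Let $\beta_j:A_j\hookrightarrow B_j$ ($j=1,2$) be $\mathcal M$-morphisms, and let $B$ be the pushout of $A\hookleftarrow A_1+A_2\xrightarrow{[\beta_1,\beta_2]}B_1+B_2$, with induced $B_1+B_2\hookrightarrow B$. Then $$\mathsf{Shift}\big(A_1+A_2\xrightarrow{[\beta_1,\beta_2]}B_1+B_2,\ \neg\exists(A_1+A_2\hookrightarrow A)\big)=\neg\exists(B_1+B_2\hookrightarrow B).$$
   Context: $\mathbf{uGraph}$: objects are triples $(E,V,i)$ of finite sets and a map $i:E\to\mathcal P^{(1,2)}(V)$ into the subsets of $V$ of size 1 or 2; morphisms are pairs of maps compatible with incidence; $\mathcal M$ is the class of component-wise injective morphisms. Conditions over an object $X$: $\mathsf{true}$, $\exists(f:X\hookrightarrow Y,c_Y)$ with $f\in\mathcal M$ and $c_Y$ a condition over $Y$ (write $\exists(f)$ for $\exists(f,\mathsf{true})$), $\neg c_X$, $c^{(1)}_X\wedge c^{(2)}_X$. The operation $\mathsf{Shift}$ (extending a condition over $X$ along $y:X\hookrightarrow Y$ in $\mathcal M$ to a condition over $Y$, such that $g\circ y\models c_X$ iff $g\models\mathsf{Shift}(y,c_X)$ for all $g\in\mathcal M$ out of $Y$) is computed recursively by: $\mathsf{Shift}(y,\mathsf{true})=\mathsf{true}$;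 $\mathsf{Shift}(y,\neg c)=\neg\mathsf{Shift}(y,c)$; $\mathsf{Shift}(y,c^{(1)}\wedge c^{(2)})=\mathsf{Shift}(y,c^{(1)})\wedge\mathsf{Shift}(y,c^{(2)})$; and $\mathsf{Shift}(y,\exists(a:X\hookrightarrow A,c_A))=\bigwedge\exists(\bar a,\mathsf{Shift}(\bar y,c_A))$, where the conjunction ranges over triples $(a':X'\hookrightarrow A,x':X\hookrightarrow X',y':X'\hookrightarrow Y)$ of $\mathcal M$-morphisms (up to isomorphism) with $a'\circ x'=a$ and $y'\circ x'=y$, where $A_{X'}$ is the pushout of $A\xleftarrow{a'}X'\xrightarrow{y'}Y$ with induced $\bar a:Y\hookrightarrow A_{X'}$ and $\bar y:A\hookrightarrow A_{X'}$. *)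

theory Defs
  imports Main
begin

record ugraph =
  gE :: "nat set"
  gV :: "nat set"
  gI :: "nat \<Rightarrow> nat set"

definition is_graph :: "ugraph \<Rightarrow> bool" where
  "is_graph G \<longleftrightarrow> finite (gE G) \<and> finite (gV G) \<and>
     (\<forall>e\<in>gE G. gI G e \<subseteq> gV G \<and> card (gI G e) \<in> {1, 2})"

record mor =
  mE :: "nat \<Rightarrow> nat"
  mV :: "nat \<Rightarrow> nat"

definition is_mor :: "ugraph \<Rightarrow> ugraph \<Rightarrow> mor \<Rightarrow> bool" where
  "is_mor G H f \<longleftrightarrow> mE f ` gE G \<subseteq> gE H \<and> mV f ` gV G \<subseteq> gV H \<and>
     (\<forall>e\<in>gE G. gI H (mE f e) = mV f ` gI G e)"

definition M_mor :: "ugraph \<Rightarrow> ugraph \<Rightarrow> mor \<Rightarrow> bool" where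
  "M_mor G H f \<longleftrightarrow> is_mor G H f \<and> inj_on (mE f) (gE G) \<and> inj_on (mV f) (gV G)"

definition comp :: "mor \<Rightarrow> mor \<Rightarrow> mor" where
  "comp g f = \<lparr>mE = mE g \<circ> mE f, mV = mV g \<circ> mV f\<rparr>"

definition idm :: mor where
  "idm = \<lparr>mE = id, mV = id\<rparr>"

definition mor_eq :: "ugraph \<Rightarrow> mor \<Rightarrow> mor \<Rightarrow> bool" where
  "mor_eq G f g \<longleftrightarrow> (\<forall>e\<in>gE G. mE f e = mE g e) \<and> (\<forall>v\<in>gV G. mV f v = mV g v)"

definition is_iso :: "ugraph \<Rightarrow> ugraph \<Rightarrow> mor \<Rightarrow> bool" where
  "is_iso G H f \<longleftrightarrow> is_mor G H f \<and> bij_betw (mE f) (gE G) (gE H) \<and> bij_betw (mV f) (gV G) (gV H)"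

text \<open>P (with ab : Y \<rightarrow> P and yb : A \<rightarrow> P) is a pushout of A <-a- X -y-> Y.\<close>
definition is_pushout :: "ugraph \<Rightarrow> ugraph \<Rightarrow> ugraph \<Rightarrow> mor \<Rightarrow> mor \<Rightarrow> ugraph \<Rightarrow> mor \<Rightarrow> mor \<Rightarrow> bool" where
  "is_pushout X A Y a y P ab yb \<longleftrightarrow>
     is_graph P \<and> is_mor Y P ab \<and> is_mor A P yb \<and> mor_eq X (comp yb a) (comp ab y) \<and>
     (\<forall>Q p q. is_graph Q \<and> is_mor A Q p \<and> is_mor Y Q q \<and> mor_eq X (comp p a) (comp q y) \<longrightarrow>
        (\<exists>u. is_mor P Q u \<and> mor_eq A (comp u yb) p \<and> mor_eq Y (comp u ab) q \<and>
           (\<forall>u'. is_mor P Q u' \<and> mor_eq A (comp u' yb) p \<and> mor_eq Y (comp u' ab) q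
                 \<longrightarrow> mor_eq P u' u)))"

text \<open>CEx B f c stands for \<exists>(f : X \<hookrightarrow> B, c) for a condition over X.\<close>
datatype cond = CTrue | CEx ugraph mor cond | CNeg cond | CAnd cond cond

fun bigAnd :: "cond list \<Rightarrow> cond" where
  "bigAnd [] = CTrue"
| "bigAnd [c] = c"
| "bigAnd (c # cs) = CAnd c (bigAnd cs)"

definition valid_triple :: "ugraph \<Rightarrow> ugraph \<Rightarrow> ugraph \<Rightarrow> mor \<Rightarrow> mor \<Rightarrow>
     ugraph \<times> mor \<times> mor \<times> mor \<Rightarrow> bool" where
  "valid_triple X Y A a y t \<longleftrightarrow> (case t of (X', a', x', y') \<Rightarrow>
     is_graph X' \<and> M_mor X' A a' \<and> M_mor X X' x' \<and> M_mor X' Y y' \<and>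
     mor_eq X (comp a' x') a \<and> mor_eq X (comp y' x') y)"

definition triple_iso :: "ugraph \<Rightarrow> ugraph \<times> mor \<times> mor \<times> mor \<Rightarrow> ugraph \<times> mor \<times> mor \<times> mor \<Rightarrow> bool" where
  "triple_iso X t1 t2 \<longleftrightarrow> (case t1 of (X1, a1, x1, y1) \<Rightarrow> case t2 of (X2, a2, x2, y2) \<Rightarrow>
     (\<exists>\<phi>. is_iso X1 X2 \<phi> \<and> mor_eq X1 (comp a2 \<phi>) a1 \<and> mor_eq X1 (comp y2 \<phi>) y1 \<and>
          mor_eq X (comp \<phi> x1) x2))"

text \<open>Shift y X Y c c' : c' is (a result of) Shift(y : X \<hookrightarrow> Y, c).  The only freedom is the choice
  of representatives of the isomorphism classes of triples, their order in the conjunction, and the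
  choice of the pushouts.\<close>
inductive Shift :: "mor \<Rightarrow> ugraph \<Rightarrow> ugraph \<Rightarrow> cond \<Rightarrow> cond \<Rightarrow> bool" where
  Shift_true: "Shift y X Y CTrue CTrue"
| Shift_neg: "Shift y X Y c c' \<Longrightarrow> Shift y X Y (CNeg c) (CNeg c')"
| Shift_and: "Shift y X Y c1 c1' \<Longrightarrow> Shift y X Y c2 c2' \<Longrightarrow> Shift y X Y (CAnd c1 c2) (CAnd c1' c2')"
| Shift_ex: "is_graph X \<Longrightarrow> is_graph Y \<Longrightarrow> is_graph A \<Longrightarrow> M_mor X Y y \<Longrightarrow> M_mor X A a \<Longrightarrow>
    (\<forall>i<n. valid_triple X Y A a y (TX i, Ta i, Tx i, Ty i)) \<Longrightarrow>
    (\<forall>i<n. is_pushout (TX i) A Y (Ta i) (Ty i) (TP i) (Tab i) (Tyb i)) \<Longrightarrow>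
    (\<forall>i<n. Shift (Tyb i) A (TP i) cA (Tc i)) \<Longrightarrow>
    (\<forall>t. valid_triple X Y A a y t \<longrightarrow>
        (\<exists>!i. i < n \<and> triple_iso X t (TX i, Ta i, Tx i, Ty i))) \<Longrightarrow>
    Shift y X Y (CEx A a cA) (bigAnd (map (\<lambda>i. CEx (TP i) (Tab i) (Tc i)) [0..<n]))"

definition subgraph :: "ugraph \<Rightarrow> ugraph \<Rightarrow> bool" where
  "subgraph H G \<longleftrightarrow> is_graph H \<and> gE H \<subseteq> gE G \<and> gV H \<subseteq> gV G \<and> (\<forall>e\<in>gE H. gI H e = gI G e)"

definition is_disj_union :: "ugraph \<Rightarrow> ugraph \<Rightarrow> ugraph \<Rightarrow> bool" where
  "is_disj_union G G1 G2 \<longleftrightarrow> is_graph G \<and> subgraph G1 G \<and> subgraph G2 G \<and>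
     gE G1 \<inter> gE G2 = {} \<and> gV G1 \<inter> gV G2 = {} \<and>
     gE G1 \<union> gE G2 = gE G \<and> gV G1 \<union> gV G2 = gV G"

text \<open>The copairing [b1, b2] : G1 + G2 \<rightarrow> H1 + H2 (given by its action on G1 resp. G2).\<close>
definition copair :: "ugraph \<Rightarrow> mor \<Rightarrow> mor \<Rightarrow> mor" where
  "copair G1 b1 b2 = \<lparr>mE = (\<lambda>e. if e \<in> gE G1 then mE b1 e else mE b2 e),
                      mV = (\<lambda>v. if v \<in> gV G1 then mV b1 v else mV b2 v)\<rparr>"

definition del_edge :: "ugraph \<Rightarrow> nat \<Rightarrow> ugraph" where
  "del_edge G e = G\<lparr>gE := gE G - {e}\<rparr>"

end

theory Submission
  imports Defs
begin

text \<open>In a triple \<open>(X', a', x', y')\<close> of the \<open>Shift\<close> construction we have \<open>a' \<circ> x' = id\<close>, so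
  the injective \<open>a'\<close> covers \<open>A\<^sub>1 + A\<^sub>2\<close>; since \<open>A\<^sub>1 + A\<^sub>2 \<hookrightarrow> A\<close> is onto on vertices, \<open>x'\<close>
  inverts \<open>a'\<close> on vertices and \<open>y' = [\<beta>\<^sub>1, \<beta>\<^sub>2] \<circ> a'\<close> there. If \<open>a'\<close> hit the bridge
  \<open>e = {u, v}\<close>, then \<open>y'\<close> would map its preimage to an edge of \<open>B\<^sub>1 + B\<^sub>2\<close> joining
  \<open>\<beta>\<^sub>1 u \<in> B\<^sub>1\<close> to \<open>\<beta>\<^sub>2 v \<in> B\<^sub>2\<close>, which does not exist. Hence \<open>a'\<close> is an isomorphism
  onto \<open>A\<^sub>1 + A\<^sub>2\<close>, the trivial triple is the only one up to isomorphism, and \<open>Shift\<close>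
  produces the single conjunct \<open>\<exists>(B\<^sub>1 + B\<^sub>2 \<hookrightarrow> B)\<close>.\<close>

lemma inj_on_right_inverse_left_inverse:
  assumes "inj_on a S" "x ` T \<subseteq> S" "\<forall>t\<in>T. a (x t) = t" "a ` S \<subseteq> T" "s \<in> S"
  shows "x (a s) = s"
  using assms by (metis image_subset_iff inj_onD)

lemma is_mor_mor_eq:
  assumes "is_graph G" "mor_eq G f g" "is_mor G H g"
  shows "is_mor G H f"
proof -
  have "mV f ` gI G e = mV g ` gI G e" if "e \<in> gE G" for e
    using assms(1,2) that by (intro image_cong) (auto simp: is_graph_def mor_eq_def)
  then show ?thesis
    using assms(2,3) by (auto simp: is_mor_def mor_eq_def image_subset_iff)
qed

lemma is_mor_into_supergraph:
  assumes "is_mor G H' f" "subgraph H' H"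
  shows "is_mor G H f"
  using assms by (auto simp: is_mor_def subgraph_def image_subset_iff)

lemma is_mor_from_disj_union:
  assumes "is_disj_union G G1 G2" "is_mor G1 H f" "is_mor G2 H f"
  shows "is_mor G H f"
  using assms unfolding is_disj_union_def subgraph_def is_mor_def by (metis Un_iff image_Un Un_subset_iff)

lemma subgraph_incidence_subset:
  assumes "subgraph H G" "e \<in> gE H"
  shows "gI G e \<subseteq> gV H"
  using assms unfolding subgraph_def is_graph_def by (metis (no_types, lifting))

lemma M_mor_idm_subgraph:
  assumes "subgraph H G"
  shows "M_mor H G idm"
  using assms by (auto simp: subgraph_def M_mor_def is_mor_def idm_def)

lemma subgraph_del_edge:
  assumes "is_graph G"
  shows "subgraph (del_edge G e) G"
  using assms by (auto simp: subgraph_def is_graph_def del_edge_def)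

lemma M_mor_copair:
  assumes X: "is_disj_union X A1 A2" and Y: "is_disj_union Y B1 B2"
    and \<beta>1: "M_mor A1 B1 \<beta>1" and \<beta>2: "M_mor A2 B2 \<beta>2"
  shows "M_mor X Y (copair A1 \<beta>1 \<beta>2)"
proof -
  have eq1: "mor_eq A1 (copair A1 \<beta>1 \<beta>2) \<beta>1"
    by (simp add: mor_eq_def copair_def)
  have eq2: "mor_eq A2 (copair A1 \<beta>1 \<beta>2) \<beta>2"
    using X by (auto simp: mor_eq_def copair_def is_disj_union_def)
  have "is_mor A1 Y (copair A1 \<beta>1 \<beta>2)" "is_mor A2 Y (copair A1 \<beta>1 \<beta>2)"
    using X Y \<beta>1 \<beta>2 eq1 eq2
    by (auto simp: is_disj_union_def M_mor_def subgraph_def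
        intro: is_mor_mor_eq is_mor_into_supergraph)
  then have "is_mor X Y (copair A1 \<beta>1 \<beta>2)"
    by (rule is_mor_from_disj_union[OF X])
  moreover have "inj_on (mE (copair A1 \<beta>1 \<beta>2)) (gE X)"
  proof -
    have "mE \<beta>1 ` gE A1 \<subseteq> gE B1" "mE \<beta>2 ` gE A2 \<subseteq> gE B2"
      using \<beta>1 \<beta>2 by (auto simp: M_mor_def is_mor_def)
    then have "mE \<beta>1 ` gE A1 \<inter> mE \<beta>2 ` gE A2 = {}"
      using Y unfolding is_disj_union_def by blast
    then have "inj_on (\<lambda>e. if e \<in> gE A1 then mE \<beta>1 e else mE \<beta>2 e) (gE A1 \<union> gE A2)"
      using \<beta>1 \<beta>2 by (intro inj_on_disjoint_Un) (auto simp: M_mor_def)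
    then show ?thesis
      using X by (simp add: copair_def is_disj_union_def)
  qed
  moreover have "inj_on (mV (copair A1 \<beta>1 \<beta>2)) (gV X)"
  proof -
    have "mV \<beta>1 ` gV A1 \<subseteq> gV B1" "mV \<beta>2 ` gV A2 \<subseteq> gV B2"
      using \<beta>1 \<beta>2 by (auto simp: M_mor_def is_mor_def)
    then have "mV \<beta>1 ` gV A1 \<inter> mV \<beta>2 ` gV A2 = {}"
      using Y unfolding is_disj_union_def by blast
    then have "inj_on (\<lambda>v. if v \<in> gV A1 then mV \<beta>1 v else mV \<beta>2 v) (gV A1 \<union> gV A2)"
      using \<beta>1 \<beta>2 by (intro inj_on_disjoint_Un) (auto simp: M_mor_def)
    then show ?thesis
      using X by (simp add: copair_def is_disj_union_def)
  qed
  ultimately show ?thesis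
    by (simp add: M_mor_def)
qed

lemma disj_union_no_crossing_edge:
  assumes Y: "is_disj_union Y B1 B2" and "f \<in> gE Y" "p \<in> gV B1" "q \<in> gV B2"
  shows "gI Y f \<noteq> {p, q}"
proof -
  have "f \<in> gE B1 \<or> f \<in> gE B2"
    using assms by (auto simp: is_disj_union_def)
  then have "gI Y f \<subseteq> gV B1 \<or> gI Y f \<subseteq> gV B2"
    using Y by (meson is_disj_union_def subgraph_incidence_subset)
  then show ?thesis
    using Y assms(3,4) unfolding is_disj_union_def by blast
qed

lemma valid_triple_trivial:
  assumes "is_graph X" "M_mor X A a" "M_mor X Y y"
  shows "valid_triple X Y A a y (X, a, idm, y)"
proof -
  have "M_mor X X idm"
    using assms(1) by (auto simp: subgraph_def intro: M_mor_idm_subgraph)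
  then show ?thesis
    using assms by (simp add: valid_triple_def mor_eq_def comp_def idm_def)
qed

lemma valid_triple_idm_vertices:
  assumes "valid_triple X Y A idm y (X', a', x', y')" "mV a' ` gV X' \<subseteq> gV X" "w \<in> gV X'"
  shows "mV x' (mV a' w) = w" "mV y' w = mV y (mV a' w)"
proof -
  have "inj_on (mV a') (gV X')" "mV x' ` gV X \<subseteq> gV X'" "\<forall>w\<in>gV X. mV a' (mV x' w) = w"
    using assms(1) by (auto simp: valid_triple_def M_mor_def is_mor_def mor_eq_def comp_def idm_def)
  then show x'a': "mV x' (mV a' w) = w"
    using assms(2,3) by (rule inj_on_right_inverse_left_inverse)
  have "mV y' (mV x' (mV a' w)) = mV y (mV a' w)"
    using assms by (auto simp: valid_triple_def mor_eq_def comp_def)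
  then show "mV y' w = mV y (mV a' w)"
    by (simp add: x'a')
qed

lemma valid_triple_idm_edges:
  assumes "valid_triple X Y A idm y (X', a', x', y')" "mE a' ` gE X' \<subseteq> gE X" "f \<in> gE X'"
  shows "mE x' (mE a' f) = f" "mE y' f = mE y (mE a' f)"
proof -
  have "inj_on (mE a') (gE X')" "mE x' ` gE X \<subseteq> gE X'" "\<forall>f\<in>gE X. mE a' (mE x' f) = f"
    using assms(1) by (auto simp: valid_triple_def M_mor_def is_mor_def mor_eq_def comp_def idm_def)
  then show x'a': "mE x' (mE a' f) = f"
    using assms(2,3) by (rule inj_on_right_inverse_left_inverse)
  have "mE y' (mE x' (mE a' f)) = mE y (mE a' f)"
    using assms by (auto simp: valid_triple_def mor_eq_def comp_def)
  then show "mE y' f = mE y (mE a' f)"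
    by (simp add: x'a')
qed

lemma triple_iso_idm:
  assumes vt: "valid_triple X Y A idm y (X', a', x', y')" and X: "subgraph X A"
    and E: "mE a' ` gE X' \<subseteq> gE X" and V: "mV a' ` gV X' \<subseteq> gV X"
  shows "triple_iso X (X', a', x', y') (X, idm, idm, y)"
proof -
  have a': "is_mor X' A a'" and x': "is_mor X X' x'" and a'x': "mor_eq X (comp a' x') idm"
    using vt by (auto simp: valid_triple_def M_mor_def)
  have "is_mor X' X a'"
    using a' X E V by (auto simp: is_mor_def subgraph_def)
  moreover have "bij_betw (mE a') (gE X') (gE X)"
  proof (rule bij_betw_byWitness[where f' = "mE x'"])
    show "\<forall>f\<in>gE X'. mE x' (mE a' f) = f"
      using valid_triple_idm_edges(1)[OF vt E] by blast
    show "\<forall>f\<in>gE X. mE a' (mE x' f) = f"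
      using a'x' by (simp add: mor_eq_def comp_def idm_def)
    show "mE x' ` gE X \<subseteq> gE X'"
      using x' by (simp add: is_mor_def)
  qed (rule E)
  moreover have "bij_betw (mV a') (gV X') (gV X)"
  proof (rule bij_betw_byWitness[where f' = "mV x'"])
    show "\<forall>w\<in>gV X'. mV x' (mV a' w) = w"
      using valid_triple_idm_vertices(1)[OF vt V] by blast
    show "\<forall>w\<in>gV X. mV a' (mV x' w) = w"
      using a'x' by (simp add: mor_eq_def comp_def idm_def)
    show "mV x' ` gV X \<subseteq> gV X'"
      using x' by (simp add: is_mor_def)
  qed (rule V)
  moreover have "mor_eq X' (comp y a') y'"
    using valid_triple_idm_edges(2)[OF vt E] valid_triple_idm_vertices(2)[OF vt V]
    by (simp add: mor_eq_def comp_def)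
  ultimately show ?thesis
    using a'x' by (auto simp: triple_iso_def is_iso_def mor_eq_def comp_def idm_def)
qed

lemma valid_triple_avoids_bridge:
  assumes X: "is_disj_union (del_edge A e) A1 A2"
    and e: "gI A e = {u, v}" and u: "u \<in> gV A1" and v: "v \<in> gV A2"
    and \<beta>1: "M_mor A1 B1 \<beta>1" and \<beta>2: "M_mor A2 B2 \<beta>2" and Y: "is_disj_union Y B1 B2"
    and vt: "valid_triple (del_edge A e) Y A idm (copair A1 \<beta>1 \<beta>2) (X', a', x', y')"
  shows "mE a' ` gE X' \<subseteq> gE (del_edge A e)"
proof
  fix f assume "f \<in> mE a' ` gE X'"
  then obtain f' where f': "f' \<in> gE X'" and f: "f = mE a' f'" by blast
  have a': "M_mor X' A a'" and y': "M_mor X' Y y'" and "is_graph X'"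
    using vt by (auto simp: valid_triple_def)
  have V: "mV a' ` gV X' \<subseteq> gV (del_edge A e)"
    using a' by (auto simp: M_mor_def is_mor_def del_edge_def)
  have "mV y' ` gI X' f' = mV (copair A1 \<beta>1 \<beta>2) ` mV a' ` gI X' f'"
    using valid_triple_idm_vertices(2)[OF vt V] f' \<open>is_graph X'\<close>
    by (force simp: is_graph_def intro: image_cong)
  then have "gI Y (mE y' f') = mV (copair A1 \<beta>1 \<beta>2) ` gI A f"
    using a' y' f' f by (auto simp: M_mor_def is_mor_def)
  moreover have "mV (copair A1 \<beta>1 \<beta>2) u = mV \<beta>1 u" "mV (copair A1 \<beta>1 \<beta>2) v = mV \<beta>2 v"
    using X u v by (auto simp: copair_def is_disj_union_def)
  ultimately have "f = e \<Longrightarrow> gI Y (mE y' f') = {mV \<beta>1 u, mV \<beta>2 v}"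
    using e by simp
  moreover have "mE y' f' \<in> gE Y" "mV \<beta>1 u \<in> gV B1" "mV \<beta>2 v \<in> gV B2"
    using y' f' \<beta>1 \<beta>2 u v by (auto simp: M_mor_def is_mor_def)
  ultimately have "f \<noteq> e"
    using disj_union_no_crossing_edge[OF Y] by blast
  then show "f \<in> gE (del_edge A e)"
    using a' f' f by (auto simp: M_mor_def is_mor_def del_edge_def)
qed

lemma Shift_ex_unique_triple:
  assumes "is_graph X" "is_graph Y" "is_graph A" "M_mor X Y y" "M_mor X A a"
    and "valid_triple X Y A a y (X0, a0, x0, y0)"
    and "\<forall>t. valid_triple X Y A a y t \<longrightarrow> triple_iso X t (X0, a0, x0, y0)"
    and "is_pushout X0 A Y a0 y0 P ab yb" and "Shift yb A P cA c"
  shows "Shift y X Y (CEx A a cA) (CEx P ab c)"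
proof -
  have "Shift y X Y (CEx A a cA) (bigAnd (map (\<lambda>i. CEx P ab c) [0..<1]))"
    by (rule Shift_ex[where TX = "\<lambda>_. X0" and Ta = "\<lambda>_. a0" and Tx = "\<lambda>_. x0" and Ty = "\<lambda>_. y0"
          and Tab = "\<lambda>_. ab" and Tyb = "\<lambda>_. yb"])
      (use assms in \<open>auto intro: ex1I[of _ 0]\<close>)
  then show ?thesis
    by simp
qed

theorem mainTheorem6:
  fixes A A1 A2 B1 B2 Y B :: ugraph and e u v :: nat and \<beta>1 \<beta>2 b ybar :: mor
  assumes "is_graph A"
    and "e \<in> gE A"
    and "is_disj_union (del_edge A e) A1 A2"
    and "gI A e = {u, v}" and "u \<in> gV A1" and "v \<in> gV A2"
    and "M_mor A1 B1 \<beta>1" and "M_mor A2 B2 \<beta>2"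
    and "is_disj_union Y B1 B2"
    and "is_pushout (del_edge A e) A Y idm (copair A1 \<beta>1 \<beta>2) B b ybar"
  shows "Shift (copair A1 \<beta>1 \<beta>2) (del_edge A e) Y
           (CNeg (CEx A idm CTrue)) (CNeg (CEx B b CTrue))"
proof -
  let ?X = "del_edge A e" and ?y = "copair A1 \<beta>1 \<beta>2"
  have X: "subgraph ?X A"
    using assms(1) by (rule subgraph_del_edge)
  have y: "M_mor ?X Y ?y"
    using assms(3,9,7,8) by (rule M_mor_copair)
  have "is_graph ?X" "is_graph Y"
    using X assms(9) by (auto simp: subgraph_def is_disj_union_def)
  have "triple_iso ?X t (?X, idm, idm, ?y)" if "valid_triple ?X Y A idm ?y t" for t
  proof (cases t)
    case (fields X' a' x' y')
    have "mV a' ` gV X' \<subseteq> gV ?X"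
      using that fields by (auto simp: valid_triple_def M_mor_def is_mor_def del_edge_def)
    moreover have "mE a' ` gE X' \<subseteq> gE ?X"
      using valid_triple_avoids_bridge[OF assms(3-9)] that fields by simp
    ultimately show ?thesis
      using triple_iso_idm[OF _ X] that fields by simp
  qed
  then have "Shift ?y ?X Y (CEx A idm CTrue) (CEx B b CTrue)"
    using \<open>is_graph ?X\<close> \<open>is_graph Y\<close> assms(1,10) y M_mor_idm_subgraph[OF X]
    by (auto intro: Shift_ex_unique_triple valid_triple_trivial Shift_true)
  then show ?thesis
    by (rule Shift_neg)
qed

end
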